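(* Let $t, u, v$ be integers with $t \ge 2$, $u \ge 2$, $v \ge 2$, and let $\lambda, \gamma$ be rationals with $\lambda < \gamma(u-v)$. Put $d = (v-1)t - v$, \[ \tau = \frac{\lambda + \gamma(v-1)t}{(v-1)t + u - v}, \qquad L(b) = \gamma - [\gamma(u-v) - \lambda]\,\frac{b\,[d(b-1)+t]}{[(d+u)(b-1)+t]\,[db+t]} \quad (b \ge 1 \text{ integer}). \] Then: (i) if $t = v = u = 2$, then $L(b) = \tau$ for all $b \ge 1$; (ii) if $u = t$ and either $t > 2$ or $v > 2$, then $L(1) = \tau$ and $L(b) > \tau$ for all $b \ge 2$; (iii) if $u < t$, then $L(b) > \tau$ for all $b \ge 1$; (iv) if $u > t$, then $L(1) = \min_{b \ge 1} L(b) < \tau$. Consequently $L(b) \ge \min\{\tau, L(1)\}$ for all $b \ge 1$. *)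

theory Defs
  imports Complex_Main
begin

definition dpar :: "int \<Rightarrow> int \<Rightarrow> int" where
  "dpar t v = (v - 1) * t - v"

definition tau :: "int \<Rightarrow> int \<Rightarrow> int \<Rightarrow> rat \<Rightarrow> rat \<Rightarrow> rat" where
  "tau t u v lam gam = (lam + gam * of_int (v - 1) * of_int t) / of_int ((v - 1) * t + u - v)"

definition Lfun :: "int \<Rightarrow> int \<Rightarrow> int \<Rightarrow> rat \<Rightarrow> rat \<Rightarrow> int \<Rightarrow> rat" where
  "Lfun t u v lam gam b = gam - (gam * of_int (u - v) - lam) *
     (of_int (b * (dpar t v * (b - 1) + t)) /
      of_int (((dpar t v + u) * (b - 1) + t) * (dpar t v * b + t)))"

end

theory Submission
  imports Defs
begin

text \<open>Put \<open>d = dpar t v \<ge> 0\<close>, \<open>D = d + u\<close>, \<open>c = \<gamma>(u - v) - \<lambda> > 0\<close> and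
  \<open>P(b) = (D(b - 1) + t)(db + t) > 0\<close>. Then \<open>\<tau> = \<gamma> - c/D\<close>, and clearing denominators gives
  \<open>L(b) - \<tau> = c t (d(b - 1) + t - u) / (D P(b))\<close>, so \<open>L(b) - \<tau>\<close> has the sign of the linear
  function \<open>d(b - 1) + t - u\<close>; this decides (i)--(iii) and \<open>L(1) < \<tau>\<close> in (iv). The minimum in (iv)
  comes from \<open>L(b) - L(1) = c (b - 1)(t d + (u - t)(d b + t)) / ((d + t) P(b))\<close>.\<close>

lemma dpar_eq: "dpar t v = (v - 1) * (t - 2) + (v - 2)"
  by (simp add: dpar_def algebra_simps)

lemma dpar_nonneg: "2 \<le> t \<Longrightarrow> 2 \<le> v \<Longrightarrow> 0 \<le> dpar t v"
  by (simp add: dpar_eq)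

lemma dpar_pos_iff: "2 \<le> t \<Longrightarrow> 2 \<le> v \<Longrightarrow> 0 < dpar t v \<longleftrightarrow> 2 < t \<or> 2 < v"
  by (auto simp: dpar_eq add_pos_nonneg add_nonneg_pos)

context
  fixes t u v :: int and lam gam :: rat
  assumes d_nonneg: "0 \<le> dpar t v" and t_pos: "0 < t" and u_pos: "0 < u"
begin

lemma tau_eq: "tau t u v lam gam = gam - (gam * of_int (u - v) - lam) / of_int (dpar t v + u)"
proof -
  have "(v - 1) * t + u - v = dpar t v + u"
    by (simp add: dpar_def)
  moreover have "of_int (dpar t v + u) \<noteq> (0::rat)"
    using d_nonneg u_pos by simp
  ultimately show ?thesis
    by (simp add: tau_def field_simps dpar_def)
qed

lemma Lfun_denom_pos:
  assumes "1 \<le> b"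
  shows "0 < (dpar t v + u) * (b - 1) + t" and "0 < dpar t v * b + t"
  using assms d_nonneg t_pos u_pos by (simp_all add: add_nonneg_pos)

lemma Lfun_minus_tau:
  assumes "1 \<le> b"
  shows "Lfun t u v lam gam b - tau t u v lam gam =
    (gam * of_int (u - v) - lam) * of_int (t * (dpar t v * (b - 1) + t - u)) /
    of_int ((dpar t v + u) * (((dpar t v + u) * (b - 1) + t) * (dpar t v * b + t)))"
proof -
  have "of_int (dpar t v + u) \<noteq> (0::rat)"
    using d_nonneg u_pos by simp
  moreover have "of_int (((dpar t v + u) * (b - 1) + t) * (dpar t v * b + t)) \<noteq> (0::rat)"
    using mult_pos_pos[OF Lfun_denom_pos[OF assms]] by linarith
  ultimately show ?thesis
    unfolding Lfun_def tau_eq by (simp add: field_simps)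
qed

lemma Lfun_compare_tau:
  assumes "lam < gam * of_int (u - v)" and "1 \<le> b"
  shows "tau t u v lam gam < Lfun t u v lam gam b \<longleftrightarrow> u < dpar t v * (b - 1) + t"
    and "Lfun t u v lam gam b = tau t u v lam gam \<longleftrightarrow> dpar t v * (b - 1) + t = u"
    and "Lfun t u v lam gam b < tau t u v lam gam \<longleftrightarrow> dpar t v * (b - 1) + t < u"
proof -
  define n where "n = dpar t v * (b - 1) + t - u"
  define k where "k = (gam * of_int (u - v) - lam) * of_int t /
    of_int ((dpar t v + u) * (((dpar t v + u) * (b - 1) + t) * (dpar t v * b + t)))"
  have k: "0 < k"
    unfolding k_def using assms(1) d_nonneg t_pos u_pos Lfun_denom_pos[OF assms(2)]
    by (intro divide_pos_pos mult_pos_pos of_int_pos) simp_all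
  have diff: "Lfun t u v lam gam b - tau t u v lam gam = k * of_int n"
    unfolding Lfun_minus_tau[OF assms(2)] k_def n_def by (simp add: algebra_simps)
  have "tau t u v lam gam < Lfun t u v lam gam b \<longleftrightarrow> 0 < k * of_int n"
    and "Lfun t u v lam gam b = tau t u v lam gam \<longleftrightarrow> k * of_int n = 0"
    and "Lfun t u v lam gam b < tau t u v lam gam \<longleftrightarrow> k * of_int n < 0"
    by (simp_all flip: diff)
  then have "tau t u v lam gam < Lfun t u v lam gam b \<longleftrightarrow> 0 < n"
    and "Lfun t u v lam gam b = tau t u v lam gam \<longleftrightarrow> n = 0"
    and "Lfun t u v lam gam b < tau t u v lam gam \<longleftrightarrow> n < 0"
    using k by (simp_all add: zero_less_mult_iff mult_less_0_iff)
  then show "tau t u v lam gam < Lfun t u v lam gam b \<longleftrightarrow> u < dpar t v * (b - 1) + t"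
    and "Lfun t u v lam gam b = tau t u v lam gam \<longleftrightarrow> dpar t v * (b - 1) + t = u"
    and "Lfun t u v lam gam b < tau t u v lam gam \<longleftrightarrow> dpar t v * (b - 1) + t < u"
    unfolding n_def by linarith+
qed

lemma Lfun_1: "Lfun t u v lam gam 1 = gam - (gam * of_int (u - v) - lam) / of_int (dpar t v + t)"
  using t_pos by (simp add: Lfun_def)

lemma Lfun_minus_Lfun_1:
  assumes "1 \<le> b"
  shows "Lfun t u v lam gam b - Lfun t u v lam gam 1 =
    (gam * of_int (u - v) - lam) * of_int ((b - 1) * (t * dpar t v + (u - t) * (dpar t v * b + t))) /
    of_int ((dpar t v + t) * (((dpar t v + u) * (b - 1) + t) * (dpar t v * b + t)))"
proof -
  have "of_int (dpar t v + t) \<noteq> (0::rat)"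
    using d_nonneg t_pos by simp
  moreover have "of_int (((dpar t v + u) * (b - 1) + t) * (dpar t v * b + t)) \<noteq> (0::rat)"
    using mult_pos_pos[OF Lfun_denom_pos[OF assms]] by linarith
  ultimately show ?thesis
    unfolding Lfun_1 by (simp add: Lfun_def field_simps)
qed

lemma Lfun_1_le:
  assumes "lam < gam * of_int (u - v)" and "t \<le> u" and "1 \<le> b"
  shows "Lfun t u v lam gam 1 \<le> Lfun t u v lam gam b"
proof -
  have "0 \<le> (b - 1) * (t * dpar t v + (u - t) * (dpar t v * b + t))"
    using assms d_nonneg t_pos by simp
  then have num: "0 \<le> (of_int ((b - 1) * (t * dpar t v + (u - t) * (dpar t v * b + t))) :: rat)"
    by (simp only: of_int_0_le_iff)
  have "0 \<le> Lfun t u v lam gam b - Lfun t u v lam gam 1"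
    unfolding Lfun_minus_Lfun_1[OF assms(3)]
    using assms(1) d_nonneg t_pos Lfun_denom_pos[OF assms(3)]
    by (intro divide_nonneg_pos mult_nonneg_nonneg num of_int_pos mult_pos_pos) simp_all
  then show ?thesis by simp
qed

end

theorem lemma25:
  fixes t u v :: int and lam gam :: rat
  assumes "t \<ge> 2" "u \<ge> 2" "v \<ge> 2"
    and "lam < gam * of_int (u - v)"
  defines "\<tau> \<equiv> tau t u v lam gam"
    and "L \<equiv> Lfun t u v lam gam"
  shows "(t = 2 \<and> v = 2 \<and> u = 2 \<longrightarrow> (\<forall>b\<ge>1. L b = \<tau>))
    \<and> (u = t \<and> (t > 2 \<or> v > 2) \<longrightarrow> L 1 = \<tau> \<and> (\<forall>b\<ge>2. L b > \<tau>))
    \<and> (u < t \<longrightarrow> (\<forall>b\<ge>1. L b > \<tau>))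
    \<and> (u > t \<longrightarrow> (\<forall>b\<ge>1. L 1 \<le> L b) \<and> L 1 < \<tau>)
    \<and> (\<forall>b\<ge>1. L b \<ge> min \<tau> (L 1))"
proof -
  have d: "0 \<le> dpar t v"
    using assms(1,3) by (rule dpar_nonneg)
  have pos: "0 < t" "0 < u"
    using assms(1,2) by simp_all
  note compare = Lfun_compare_tau[OF d pos assms(4), folded \<tau>_def L_def]
  note L1_le = Lfun_1_le[OF d pos assms(4), folded L_def]
  have t_le: "t \<le> dpar t v * (b - 1) + t" if "1 \<le> b" for b
    using d that by simp
  show ?thesis
  proof (intro conjI impI allI)
    fix b :: int assume "t = 2 \<and> v = 2 \<and> u = 2" "1 \<le> b"
    then show "L b = \<tau>" using compare(2) by (simp add: dpar_def)
  next
    assume "u = t \<and> (2 < t \<or> 2 < v)"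
    then show "L 1 = \<tau>" using compare(2) by simp
  next
    fix b :: int assume "u = t \<and> (2 < t \<or> 2 < v)" "2 \<le> b"
    then show "\<tau> < L b" using compare(1) dpar_pos_iff[OF assms(1,3)] by simp
  next
    fix b :: int assume "u < t" "1 \<le> b"
    then show "\<tau> < L b" using compare(1) t_le by fastforce
  next
    fix b :: int assume "t < u" "1 \<le> b"
    then show "L 1 \<le> L b" using L1_le by simp
  next
    assume "t < u"
    then show "L 1 < \<tau>" using compare(3) by simp
  next
    fix b :: int assume "1 \<le> b"
    then show "min \<tau> (L 1) \<le> L b"
      using compare(3) t_le L1_le by (cases "t \<le> u") (fastforce simp: min_le_iff_disj)+
  qed
qed

end
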